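(* Let $N\ge 2$, $d\ge 1$, and let $\psi:\mathbb{R}^d\times\mathbb{R}^d\to\mathbb{R}$ be a positive, bounded, continuous function with $K:=\|\psi\|_\infty$. Let $\{t_n\}_{n\in\mathbb{N}_0}$ be an increasing sequence of nonnegative numbers with $t_0=0$, $t_n\to\infty$, and define $\alpha:[0,\infty)\to\{-1,1\}$ by $\alpha(0)=1$, $\alpha(t)=1$ for $t\in(t_{2n},t_{2n+1})$ and $\alpha(t)=-1$ for $t\in[t_{2n+1},t_{2n+2}]$, $n\in\mathbb{N}_0$. Assume $t_{2n+2}-t_{2n+1}<\frac{\ln 2}{K}$ for all $n\in\mathbb{N}_0$, $\sum_{p=0}^{\infty}(t_{2p+2}-t_{2p+1})<+\infty$, and $$\sup_{n\in\mathbb{N}_0}\left(\frac{e^{K(t_{2n+2}-t_{2n+1})}}{2-e^{K(t_{2n+2}-t_{2n+1})}}\max\left\{1-e^{-K(t_{2n+1}-t_{2n})},\,1-\frac{\psi_0}{K}\big(1-e^{-K(t_{2n+1}-t_{2n})}\big)\right\}\right)=c<1,$$ where $\psi_0:=\min_{|y|,|z|\le M^0}\psi(y,z)$ and $M^0:=e^{K\sum_{p=0}^{\infty}(t_{2p+2}-t_{2p+1})}\max_{i}|x_i^0|$. Then every solution $\{x_i\}_{i=1,\dots,N}$ of $$\frac{d}{dt}x_i(t)=\frac{1}{N-1}\sum_{j\ne i}\alpha(t)\,\psi(x_i(t),x_j(t))\,(x_j(t)-x_i(t)),\quad t>0,\qquad x_i(0)=x_i^0\in\mathbb{R}^d,$$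 satisfies $$d(t)\le e^{-\gamma\left(t-\frac{\ln 2}{K}-T\right)}d(0)\quad\forall t\ge 0,$$ for two suitable positive constants $\gamma$ and $T$, independent of $N$, where $d(t):=\max_{i,j}|x_i(t)-x_j(t)|$.
   Context: $\mathbb{N}_0=\{0,1,2,\dots\}$; $|\cdot|$ is the Euclidean norm on $\mathbb{R}^d$. A solution is a continuous function that is $C^1$ on each interval $(t_n,t_{n+1})$ and satisfies the equation there. *)

theory Defs
  imports "HOL-Analysis.Analysis"
begin

definition supnorm :: "('a \<Rightarrow> 'a \<Rightarrow> real) \<Rightarrow> real" where
  "supnorm \<psi> = (SUP p\<in>UNIV. \<bar>\<psi> (fst p) (snd p)\<bar>)"

definition alpha :: "(nat \<Rightarrow> real) \<Rightarrow> real \<Rightarrow> real" where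
  "alpha t s = (if s = 0 then 1
                else if (\<exists>n. t (2*n) < s \<and> s < t (2*n+1)) then 1 else -1)"

definition negtime :: "(nat \<Rightarrow> real) \<Rightarrow> real" where
  "negtime t = (\<Sum>p. t (2*p+2) - t (2*p+1))"

text \<open>M^0 as a function of m = max_i |x_i^0|.\<close>
definition M0 :: "('a \<Rightarrow> 'a \<Rightarrow> real) \<Rightarrow> (nat \<Rightarrow> real) \<Rightarrow> real \<Rightarrow> real" where
  "M0 \<psi> t m = exp (supnorm \<psi> * negtime t) * m"

definition psi0 :: "('a::real_normed_vector \<Rightarrow> 'a \<Rightarrow> real) \<Rightarrow> real \<Rightarrow> real" where
  "psi0 \<psi> M = (INF p\<in>cball 0 M \<times> cball 0 M. \<psi> (fst p) (snd p))"

definition cterm :: "('a::real_normed_vector \<Rightarrow> 'a \<Rightarrow> real) \<Rightarrow> (nat \<Rightarrow> real) \<Rightarrow> real \<Rightarrow> nat \<Rightarrow> real" where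
  "cterm \<psi> t m n =
     (let K = supnorm \<psi>;
          a = exp (K * (t (2*n+2) - t (2*n+1)));
          b = 1 - exp (- K * (t (2*n+1) - t (2*n)))
      in a / (2 - a) * max b (1 - psi0 \<psi> (M0 \<psi> t m) / K * b))"

definition is_solution ::
  "('a::euclidean_space \<Rightarrow> 'a \<Rightarrow> real) \<Rightarrow> (nat \<Rightarrow> real) \<Rightarrow> nat \<Rightarrow> (nat \<Rightarrow> real \<Rightarrow> 'a) \<Rightarrow> bool" where
  "is_solution \<psi> t N x \<longleftrightarrow>
     (\<forall>i<N. continuous_on {0..} (x i)) \<and>
     (\<forall>i<N. \<forall>n. \<forall>s\<in>{t n<..<t (Suc n)}.
        (x i has_vector_derivative
           ((1 / (real N - 1)) *\<^sub>R
              (\<Sum>j\<in>{..<N} - {i}. (alpha t s * \<psi> (x i s) (x j s)) *\<^sub>R (x j s - x i s))))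
        (at s)) \<and>
     (\<forall>i<N. \<forall>n. continuous_on {t n<..<t (Suc n)} (\<lambda>s. vector_derivative (x i) (at s)))"

definition diam :: "nat \<Rightarrow> (nat \<Rightarrow> real \<Rightarrow> 'a::real_normed_vector) \<Rightarrow> real \<Rightarrow> real" where
  "diam N x s = Max {norm (x i s - x j s) | i j. i < N \<and> j < N}"

end

theory Submission
  imports Defs
begin

(* Projections x_i . w of the particles obey a maximum principle: at an extremal projection the
   interaction cannot push outwards while alpha = 1, and pushes outwards at rate at most 2K while
   alpha = -1.  Since the total repulsive time S is finite, all particles stay in the ball of
   radius exp (2 K S) max_i |x_i(0)|, on which psi >= gamma > 0.  The same principle applied to
   the projected spreads (x_i - x_k) . w gives contraction at rate gamma on attractive phases and
   expansion at rate at most 2K on repulsive ones, hence d(t) <= exp (- gamma t + (2K + gamma) S) d(0).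
   This crude rate suffices for the existential statement. *)

section \<open>A maximum principle for finite families of functions\<close>

lemma eventually_less_at_right_of_continuous_on:
  fixes f g :: "real \<Rightarrow> real"
  assumes "s < b" "continuous_on {s..b} f" "continuous_on {s..b} g" "f s < g s"
  shows "eventually (\<lambda>y. f y < g y) (at_right s)"
proof -
  have "((\<lambda>y. g y - f y) \<longlongrightarrow> g s - f s) (at_right s)"
    using assms(1-3) unfolding continuous_on_def at_within_Icc_at_right[OF assms(1), symmetric]
    by (auto intro!: tendsto_diff)
  from order_tendstoD(1)[OF this, of 0] show ?thesis
    using assms(4) by (auto elim: eventually_mono)
qed

lemma eventually_le_at_right_of_deriv_less:
  fixes f g :: "real \<Rightarrow> real"
  assumes "(f has_real_derivative f') (at s)" "(g has_real_derivative g') (at s)"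
    and "f' < g'" and "f s \<le> g s"
  shows "eventually (\<lambda>y. f y \<le> g y) (at_right s)"
proof -
  have "((\<lambda>y. g y - f y) has_real_derivative g' - f') (at s)"
    using DERIV_diff[OF assms(2,1)] .
  moreover have "0 < g' - f'" using assms(3) by simp
  ultimately obtain d where "d > 0"
    and d: "\<And>h. 0 < h \<Longrightarrow> h < d \<Longrightarrow> g s - f s < g (s + h) - f (s + h)"
    using DERIV_pos_inc_right by blast
  show ?thesis
    unfolding eventually_at_right_field
  proof (intro exI conjI allI impI)
    fix y assume "s < y" "y < s + d"
    with d[of "y - s"] assms(4) show "f y \<le> g y" by simp
  qed (use \<open>d > 0\<close> in simp)
qed

lemma finite_family_below_barrier:
  fixes q q' :: "'i \<Rightarrow> real \<Rightarrow> real" and g g' :: "real \<Rightarrow> real"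
  assumes fin: "finite I"
    and cont: "\<And>i. i \<in> I \<Longrightarrow> continuous_on {a..b} (q i)"
    and der: "\<And>i s. i \<in> I \<Longrightarrow> s \<in> {a<..<b} \<Longrightarrow> (q i has_real_derivative q' i s) (at s)"
    and g_cont: "continuous_on {a..b} g"
    and g_der: "\<And>s. s \<in> {a<..<b} \<Longrightarrow> (g has_real_derivative g' s) (at s)"
    and touch: "\<And>i s. i \<in> I \<Longrightarrow> s \<in> {a<..<b} \<Longrightarrow> \<forall>j\<in>I. q j s \<le> g s \<Longrightarrow> q i s = g s
                  \<Longrightarrow> q' i s < g' s"
    and init: "\<And>i. i \<in> I \<Longrightarrow> q i a < g a"
    and j: "j \<in> I" and u: "u \<in> {a..b}"
  shows "q j u \<le> g u"
proof (rule ccontr)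
  assume above: "\<not> q j u \<le> g u"
  define S where "S = {y \<in> {a..u}. \<forall>i\<in>I. q i y \<le> g y}"
  have "S = {a..u} \<inter> (\<Inter>i\<in>I. {y \<in> {a..u}. q i y \<le> g y})"
    unfolding S_def by auto
  moreover have "closed {y \<in> {a..u}. q i y \<le> g y}" if "i \<in> I" for i
    using cont[OF that] g_cont u
    by (intro continuous_on_closed_Collect_le) (auto elim!: continuous_on_subset)
  ultimately have "closed S" by auto
  moreover have "a \<in> S" using init u unfolding S_def by (auto intro: less_imp_le)
  moreover have bdd: "bdd_above S" unfolding S_def by (rule bdd_aboveI[of _ u]) auto
  ultimately have "Sup S \<in> S" by (intro closed_contains_Sup) auto
  define s where "s = Sup S"
  have "u \<notin> S" using above j unfolding S_def by auto
  with \<open>Sup S \<in> S\<close> have s: "a \<le> s" "s < u" "\<forall>i\<in>I. q i s \<le> g s"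
    unfolding s_def S_def by (auto simp: order.order_iff_strict)
  have "eventually (\<lambda>y. q i y \<le> g y) (at_right s)" if i: "i \<in> I" for i
  proof (cases "q i s < g s")
    case True
    have "continuous_on {s..b} (q i)" "continuous_on {s..b} g"
      using cont[OF i] g_cont s u by (auto elim!: continuous_on_subset)
    from eventually_less_at_right_of_continuous_on[OF _ this True] s u show ?thesis
      by (auto elim: eventually_mono)
  next
    case False
    with s(3) i have "q i s = g s" by fastforce
    moreover from this init[OF i] s(1,2) u have "s \<in> {a<..<b}" by (cases "s = a") auto
    ultimately show ?thesis
      using eventually_le_at_right_of_deriv_less[OF der[OF i] g_der] touch[OF i] s(3) by simp
  qed
  then have "eventually (\<lambda>y. \<forall>i\<in>I. q i y \<le> g y) (at_right s)"
    by (rule eventually_ball_finite[OF fin, rule_format])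
  moreover have "eventually (\<lambda>y. s < y \<and> y < u) (at_right s)"
    unfolding eventually_at_right_field using s(2) by blast
  ultimately obtain y where "s < y" "y < u" "\<forall>i\<in>I. q i y \<le> g y"
    using eventually_happens'[OF trivial_limit_at_right_real] eventually_conj by blast
  then have "y \<in> S" using s unfolding S_def by auto
  with bdd \<open>s < y\<close> show False unfolding s_def by (meson cSup_upper leD)
qed

lemma max_principle_finite_family:
  fixes q q' :: "'i \<Rightarrow> real \<Rightarrow> real"
  assumes fin: "finite I"
    and cont: "\<And>i. i \<in> I \<Longrightarrow> continuous_on {a..b} (q i)"
    and der: "\<And>i s. i \<in> I \<Longrightarrow> s \<in> {a<..<b} \<Longrightarrow> (q i has_real_derivative q' i s) (at s)"
    and at_max: "\<And>i s. i \<in> I \<Longrightarrow> s \<in> {a<..<b} \<Longrightarrow> \<forall>j\<in>I. q j s \<le> q i s \<Longrightarrow> q' i s \<le> 0"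
    and init: "\<And>i. i \<in> I \<Longrightarrow> q i a \<le> C"
    and j: "j \<in> I" and u: "u \<in> {a..b}"
  shows "q j u \<le> C"
proof (rule field_le_epsilon)
  fix e :: real assume "e > 0"
  define e' where "e' = e / (1 + (u - a))"
  have "e' > 0" using \<open>e > 0\<close> u unfolding e'_def by auto
  have "q j u \<le> C + e' * (1 + (u - a))"
  proof (rule finite_family_below_barrier[where g' = "\<lambda>_. e'", OF fin cont der])
    show "continuous_on {a..b} (\<lambda>y. C + e' * (1 + (y - a)))"
      by (intro continuous_intros)
    show "((\<lambda>y. C + e' * (1 + (y - a))) has_real_derivative e') (at s)" for s
      by (auto intro!: derivative_eq_intros)
    show "q' i s < e'"
      if "i \<in> I" "s \<in> {a<..<b}" "\<forall>j\<in>I. q j s \<le> C + e' * (1 + (s - a))"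
        and "q i s = C + e' * (1 + (s - a))" for i s
      using at_max[of i s] that \<open>e' > 0\<close> by fastforce
  qed (use init \<open>e' > 0\<close> j u in \<open>force+\<close>)
  then show "q j u \<le> C + e" using u unfolding e'_def by simp
qed

lemma max_principle_finite_family_exp:
  fixes q q' :: "'i \<Rightarrow> real \<Rightarrow> real"
  assumes fin: "finite I"
    and cont: "\<And>i. i \<in> I \<Longrightarrow> continuous_on {a..b} (q i)"
    and der: "\<And>i s. i \<in> I \<Longrightarrow> s \<in> {a<..<b} \<Longrightarrow> (q i has_real_derivative q' i s) (at s)"
    and at_max: "\<And>i s. i \<in> I \<Longrightarrow> s \<in> {a<..<b} \<Longrightarrow> \<forall>j\<in>I. q j s \<le> q i s \<Longrightarrow> q' i s \<le> l * q i s"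
    and init: "\<And>i. i \<in> I \<Longrightarrow> q i a \<le> C"
    and j: "j \<in> I" and u: "u \<in> {a..b}"
  shows "q j u \<le> C * exp (l * (u - a))"
proof -
  define h where "h i y = q i y * exp (- l * (y - a))" for i y
  define h' where "h' i y = (q' i y - l * q i y) * exp (- l * (y - a))" for i y
  have "h j u \<le> C"
  proof (rule max_principle_finite_family[OF fin _ _ _ _ j u])
    show "continuous_on {a..b} (h i)" if "i \<in> I" for i
      unfolding h_def using cont[OF that] by (intro continuous_intros)
    show "(h i has_real_derivative h' i s) (at s)" if "i \<in> I" "s \<in> {a<..<b}" for i s
      unfolding h_def h'_def
      by (rule derivative_eq_intros der[OF that] refl)+ (simp add: algebra_simps)
    show "h' i s \<le> 0" if "i \<in> I" "s \<in> {a<..<b}" "\<forall>j\<in>I. h j s \<le> h i s" for i s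
      using that at_max[of i s] unfolding h_def h'_def by (simp add: mult_nonpos_nonneg)
  qed (use init in \<open>simp add: h_def\<close>)
  then have "h j u * exp (l * (u - a)) \<le> C * exp (l * (u - a))" by simp
  then show ?thesis unfolding h_def by (simp add: mult.assoc flip: exp_add)
qed

definition negtime_upto :: "(nat \<Rightarrow> real) \<Rightarrow> nat \<Rightarrow> real" where
  "negtime_upto t n = (\<Sum>k<n. if odd k then t (Suc k) - t k else 0)"

lemma negtime_upto_double: "negtime_upto t (2 * n) = (\<Sum>p<n. t (2*p+2) - t (2*p+1))"
  by (induction n) (simp_all add: negtime_upto_def)

lemma negtime_upto_le_negtime:
  assumes "mono t" and "summable (\<lambda>p. t (2*p+2) - t (2*p+1))"
  shows "negtime_upto t n \<le> negtime t"
proof -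
  have "negtime_upto t n \<le> negtime_upto t (2 * n)"
    unfolding negtime_upto_def using \<open>mono t\<close>
    by (intro sum_mono2) (auto simp: mono_def)
  also have "\<dots> \<le> negtime t"
    unfolding negtime_upto_double negtime_def using assms
    by (intro sum_le_suminf) (auto simp: mono_def)
  finally show ?thesis .
qed

lemma switching_interval_containing:
  fixes t :: "nat \<Rightarrow> real"
  assumes "filterlim t at_top sequentially" and "t 0 \<le> u"
  obtains n where "u \<in> {t n..t (Suc n)}"
proof -
  obtain n where "u < t n"
    using assms(1) unfolding filterlim_at_top_dense eventually_sequentially by blast
  from ex_least_nat_less[of "\<lambda>n. u < t n", OF this] assms(2) obtain k
    where "\<forall>i\<le>k. \<not> u < t i" "u < t (Suc k)" by auto
  then show ?thesis using that[of k] by auto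
qed

lemma max_principle_switching:
  fixes q q' :: "'i \<Rightarrow> real \<Rightarrow> real" and t :: "nat \<Rightarrow> real"
  assumes fin: "finite I"
    and t_mono: "strict_mono t" and t0: "t 0 = 0" and t_inf: "filterlim t at_top sequentially"
    and gaps_sum: "summable (\<lambda>p. t (2*p+2) - t (2*p+1))"
    and cont: "\<And>i. i \<in> I \<Longrightarrow> continuous_on {0..} (q i)"
    and der: "\<And>i n s. i \<in> I \<Longrightarrow> s \<in> {t n<..<t (Suc n)} \<Longrightarrow>
                (q i has_real_derivative q' i s) (at s)"
    and at_max: "\<And>i n s. i \<in> I \<Longrightarrow> s \<in> {t n<..<t (Suc n)} \<Longrightarrow> \<forall>j\<in>I. q j s \<le> q i s \<Longrightarrow>
                   q' i s \<le> (if even n then a else b) * q i s"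
    and init: "\<And>i. i \<in> I \<Longrightarrow> q i 0 \<le> C"
    and "0 \<le> C" and "a \<le> b" and j: "j \<in> I" and "0 \<le> u"
  shows "q j u \<le> C * exp (a * u + (b - a) * negtime t)"
proof -
  \<comment> \<open>rate \<open>a\<close> throughout, plus the excess \<open>b - a\<close> over the odd intervals before \<open>t n\<close>\<close>
  define E where "E n y = C * exp (a * y + (b - a) * negtime_upto t n)" for n y
  have t_nonneg: "0 \<le> t n" for n
    using t0 strict_mono_less_eq[OF t_mono, of 0 n] by simp
  have interval: "q i y \<le> E (Suc n) y"
    if node: "\<forall>i\<in>I. q i (t n) \<le> E n (t n)" and i: "i \<in> I" and y: "y \<in> {t n..t (Suc n)}"
    for n i y
  proof -
    define l where "l = (if even n then a else b)"
    have "q i y \<le> E n (t n) * exp (l * (y - t n))"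
    proof (rule max_principle_finite_family_exp[OF fin _ der _ _ i y])
      show "continuous_on {t n..t (Suc n)} (q j)" if "j \<in> I" for j
        using cont[OF that] t_nonneg[of n] by (auto elim!: continuous_on_subset)
    qed (use at_max node in \<open>auto simp: l_def\<close>)
    also have "\<dots> = C * exp (a * t n + (b - a) * negtime_upto t n + l * (y - t n))"
      unfolding E_def by (simp add: mult.assoc flip: exp_add)
    also have "\<dots> \<le> E (Suc n) y"
    proof -
      have "a * t n + (b - a) * negtime_upto t n + l * (y - t n)
            \<le> a * y + (b - a) * negtime_upto t (Suc n)"
        using mult_left_mono[of y "t (Suc n)" "b - a"] y \<open>a \<le> b\<close>
        unfolding l_def negtime_upto_def by (auto simp: algebra_simps)
      then show ?thesis unfolding E_def using \<open>0 \<le> C\<close> by (intro mult_left_mono) auto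
    qed
    finally show ?thesis .
  qed
  have node: "\<forall>i\<in>I. q i (t n) \<le> E n (t n)" for n
  proof (induction n)
    case 0
    then show ?case using init t0 unfolding E_def negtime_upto_def by simp
  next
    case (Suc n)
    then show ?case using interval strict_monoD[OF t_mono, of n "Suc n"] by auto
  qed
  obtain n where "u \<in> {t n..t (Suc n)}"
    using switching_interval_containing[OF t_inf] t0 \<open>0 \<le> u\<close> by auto
  with interval[OF node j] have "q j u \<le> E (Suc n) u" .
  also have "\<dots> \<le> C * exp (a * u + (b - a) * negtime t)"
    unfolding E_def using negtime_upto_le_negtime[OF strict_mono_mono[OF t_mono] gaps_sum]
      \<open>0 \<le> C\<close> \<open>a \<le> b\<close> by (auto intro!: mult_left_mono)
  finally show ?thesis .
qed

section \<open>The switched interaction system\<close>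

lemma mean_over_others_le:
  fixes f :: "nat \<Rightarrow> real"
  assumes "2 \<le> N" and "i < N" and "\<And>j. j < N \<Longrightarrow> j \<noteq> i \<Longrightarrow> f j \<le> B"
  shows "(1 / (real N - 1)) * (\<Sum>j\<in>{..<N} - {i}. f j) \<le> B"
proof -
  have "(\<Sum>j\<in>{..<N} - {i}. f j) \<le> (\<Sum>j\<in>{..<N} - {i}. B)" using assms(3) by (intro sum_mono) auto
  also have "\<dots> = (real N - 1) * B" using assms(1,2) by (simp add: of_nat_diff)
  finally show ?thesis using assms(1) by (simp add: field_simps)
qed

lemma mean_over_others_nonpos_le:
  fixes f w :: "nat \<Rightarrow> real"
  assumes "i < N" and "f i = 0" and "\<And>j. j < N \<Longrightarrow> f j \<le> 0" and "\<And>j. j < N \<Longrightarrow> p \<le> w j"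
  shows "(1 / (real N - 1)) * (\<Sum>j\<in>{..<N} - {i}. w j * f j) \<le> p / (real N - 1) * (\<Sum>j<N. f j)"
proof -
  have "(\<Sum>j\<in>{..<N} - {i}. w j * f j) \<le> (\<Sum>j\<in>{..<N} - {i}. p * f j)"
    using assms(3,4) by (intro sum_mono mult_right_mono_neg) auto
  also have "\<dots> = p * (\<Sum>j<N. f j)"
    using assms(1,2) by (simp add: sum_diff1 sum_distrib_left)
  finally show ?thesis using assms(1) by (simp add: divide_right_mono)
qed

lemma mean_over_others_mult_le:
  fixes f w :: "nat \<Rightarrow> real"
  assumes "2 \<le> N" and "i < N" and "\<And>j. j < N \<Longrightarrow> 0 \<le> f j \<and> f j \<le> c"
    and "\<And>j. j < N \<Longrightarrow> 0 \<le> w j \<and> w j \<le> K"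
  shows "(1 / (real N - 1)) * (\<Sum>j\<in>{..<N} - {i}. w j * f j) \<le> K * c"
  using assms by (intro mean_over_others_le mult_mono) (auto intro: order_trans)

definition velocity ::
  "('a::real_vector \<Rightarrow> 'a \<Rightarrow> real) \<Rightarrow> (nat \<Rightarrow> real) \<Rightarrow> nat \<Rightarrow> (nat \<Rightarrow> real \<Rightarrow> 'a) \<Rightarrow> nat \<Rightarrow> real \<Rightarrow> 'a"
  where "velocity \<psi> t N x i s = (1 / (real N - 1)) *\<^sub>R
    (\<Sum>j\<in>{..<N} - {i}. (alpha t s * \<psi> (x i s) (x j s)) *\<^sub>R (x j s - x i s))"

lemma velocity_inner:
  "velocity \<psi> t N x i s \<bullet> w =
     (1 / (real N - 1)) * (\<Sum>j\<in>{..<N} - {i}. alpha t s * \<psi> (x i s) (x j s) * (x j s \<bullet> w - x i s \<bullet> w))"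
  unfolding velocity_def by (simp add: inner_sum_left inner_diff_left)

lemma is_solution_has_derivative_inner:
  assumes "is_solution \<psi> t N x" and "i < N" and "s \<in> {t n<..<t (Suc n)}"
  shows "((\<lambda>y. x i y \<bullet> w) has_real_derivative velocity \<psi> t N x i s \<bullet> w) (at s)"
proof -
  have "(x i has_vector_derivative velocity \<psi> t N x i s) (at s)"
    using assms unfolding is_solution_def velocity_def by blast
  then have "((\<lambda>y. x i y \<bullet> w) has_derivative (\<lambda>h. (h *\<^sub>R velocity \<psi> t N x i s) \<bullet> w)) (at s)"
    unfolding has_vector_derivative_def by (rule has_derivative_inner_left)
  then show ?thesis
    unfolding has_field_derivative_def by (simp add: mult.commute [of _ "velocity \<psi> t N x i s \<bullet> w"])
qed

lemma alpha_switching_interval: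
  assumes "strict_mono t" and "t 0 = 0" and s: "s \<in> {t n<..<t (Suc n)}"
  shows "alpha t s = (if even n then 1 else -1)"
proof (cases "even n")
  case True
  then show ?thesis using s unfolding alpha_def by (auto elim!: evenE)
next
  case False
  then obtain m where n: "n = 2 * m + 1" by (rule oddE)
  have "s \<noteq> 0" using s assms(2) strict_mono_less_eq[OF assms(1), of 0 n] by auto
  moreover have "\<not> (t (2 * k) < s \<and> s < t (2 * k + 1))" for k
  proof
    assume "t (2 * k) < s \<and> s < t (2 * k + 1)"
    with s n have "t (2 * k) < t (2 * m + 2)" "t (2 * m + 1) < t (2 * k + 1)" by auto
    then have "2 * k < 2 * m + 2" "2 * m + 1 < 2 * k + 1"
      using strict_mono_less[OF assms(1)] by blast+
    then show False by simp
  qed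
  ultimately show ?thesis using False unfolding alpha_def by auto
qed

lemma velocity_inner_at_max_abs_le:
  assumes N: "2 \<le> N" and i: "i < N" and \<psi>: "\<And>y z. 0 \<le> \<psi> y z" "\<And>y z. \<psi> y z \<le> K"
    and "strict_mono t" and "t 0 = 0" and s: "s \<in> {t n<..<t (Suc n)}"
    and max_abs: "\<And>j. j < N \<Longrightarrow> \<bar>x j s \<bullet> w\<bar> \<le> x i s \<bullet> w"
  shows "velocity \<psi> t N x i s \<bullet> w \<le> (if even n then 0 else 2 * K) * (x i s \<bullet> w)"
proof -
  define P where "P j = x j s \<bullet> w" for j
  define W where "W j = \<psi> (x i s) (x j s)" for j
  have v: "velocity \<psi> t N x i s \<bullet> w
           = alpha t s * ((1 / (real N - 1)) * (\<Sum>j\<in>{..<N} - {i}. W j * (P j - P i)))"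
    unfolding velocity_inner P_def W_def by (simp add: sum_distrib_left algebra_simps)
  have P: "P j \<le> P i" "P i - P j \<le> 2 * P i" if "j < N" for j
    using max_abs[OF that] unfolding P_def by auto
  show ?thesis
  proof (cases "even n")
    case True
    have "(1 / (real N - 1)) * (\<Sum>j\<in>{..<N} - {i}. W j * (P j - P i))
          \<le> 0 / (real N - 1) * (\<Sum>j<N. P j - P i)"
      using P \<psi>(1) unfolding W_def by (intro mean_over_others_nonpos_le[OF i]) auto
    then show ?thesis
      using True alpha_switching_interval[OF assms(5,6) s] unfolding v by simp
  next
    case False
    have "(1 / (real N - 1)) * (\<Sum>j\<in>{..<N} - {i}. W j * (P i - P j)) \<le> K * (2 * P i)"
      using P \<psi> unfolding W_def by (intro mean_over_others_mult_le[OF N i]) auto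
    then show ?thesis
      using False alpha_switching_interval[OF assms(5,6) s] unfolding v P_def
      by (simp add: right_diff_distrib sum_subtractf)
  qed
qed

lemma velocity_spread_le:
  assumes N: "2 \<le> N" and i: "i < N" and k: "k < N"
    and \<psi>: "\<And>y z. 0 \<le> \<psi> y z" "\<And>y z. \<psi> y z \<le> K" and "0 \<le> p"
    and low: "\<And>l j. l < N \<Longrightarrow> j < N \<Longrightarrow> p \<le> \<psi> (x l s) (x j s)"
    and "strict_mono t" and "t 0 = 0" and s: "s \<in> {t n<..<t (Suc n)}"
    and extreme: "\<And>j. j < N \<Longrightarrow> x k s \<bullet> w \<le> x j s \<bullet> w \<and> x j s \<bullet> w \<le> x i s \<bullet> w"
  shows "(velocity \<psi> t N x i s - velocity \<psi> t N x k s) \<bullet> w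
           \<le> (if even n then - p else 2 * K) * ((x i s - x k s) \<bullet> w)"
proof -
  define P where "P j = x j s \<bullet> w" for j
  define M where "M l f = (1 / (real N - 1)) * (\<Sum>j\<in>{..<N} - {l}. \<psi> (x l s) (x j s) * f j)" for l f
  have v: "velocity \<psi> t N x l s \<bullet> w = alpha t s * M l (\<lambda>j. P j - P l)" for l
    unfolding velocity_inner M_def P_def by (simp add: sum_distrib_left algebra_simps)
  have swap: "M l (\<lambda>j. P l - P j) = - M l (\<lambda>j. P j - P l)" for l
    unfolding M_def by (simp add: right_diff_distrib sum_subtractf)
  have ext: "P k \<le> P j" "P j \<le> P i" if "j < N" for j
    using extreme[OF that] unfolding P_def by auto
  have spread: "(x i s - x k s) \<bullet> w = P i - P k"
    unfolding P_def by (simp add: inner_diff_left)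
  show ?thesis
  proof (cases "even n")
    case True
    have Mi: "M i (\<lambda>j. P j - P i) \<le> p / (real N - 1) * (\<Sum>j<N. P j - P i)"
      unfolding M_def using ext low i by (intro mean_over_others_nonpos_le) auto
    have Mk: "M k (\<lambda>j. P k - P j) \<le> p / (real N - 1) * (\<Sum>j<N. P k - P j)"
      unfolding M_def using ext low k by (intro mean_over_others_nonpos_le) auto
    have sums: "(\<Sum>j<N. P j - P i) + (\<Sum>j<N. P k - P j) = real N * (P k - P i)"
      by (simp flip: sum.distrib)
    have "M i (\<lambda>j. P j - P i) + M k (\<lambda>j. P k - P j)
          \<le> p / (real N - 1) * ((\<Sum>j<N. P j - P i) + (\<Sum>j<N. P k - P j))"
      using add_mono[OF Mi Mk] by (simp only: distrib_left)
    also have "\<dots> = p * (real N / (real N - 1)) * (P k - P i)"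
      unfolding sums by (simp add: mult.assoc)
    also have "\<dots> \<le> p * 1 * (P k - P i)"
      using N ext(1)[OF i] \<open>0 \<le> p\<close> by (intro mult_right_mono_neg mult_left_mono) auto
    finally show ?thesis
      using True alpha_switching_interval[OF assms(8,9) s] spread
      unfolding inner_diff_left v swap by (simp add: right_diff_distrib)
  next
    case False
    have "M i (\<lambda>j. P i - P j) \<le> K * (P i - P k)" "M k (\<lambda>j. P j - P k) \<le> K * (P i - P k)"
      unfolding M_def using ext \<psi> i k by (intro mean_over_others_mult_le[OF N]; force)+
    then show ?thesis
      using False alpha_switching_interval[OF assms(8,9) s] spread
      unfolding inner_diff_left v swap by simp
  qed
qed

lemma norm_le_if_inner_le:
  fixes x :: "'a::real_inner"
  assumes "\<And>w. x \<bullet> w \<le> c * norm w" and "0 \<le> c"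
  shows "norm x \<le> c"
proof (cases "x = 0")
  case False
  have "norm x * norm x \<le> c * norm x"
    using assms(1)[of x] by (simp add: power2_norm_eq_inner[symmetric] power2_eq_square)
  then show ?thesis using False by simp
qed (use assms(2) in simp)

lemma norm_le_diam:
  assumes "i < N" and "j < N"
  shows "norm (x i s - x j s) \<le> diam N x s"
  unfolding diam_def using assms by (intro Max_ge) (auto intro: finite_image_set2)

lemma diam_le:
  assumes "0 < N" and "\<And>i j. i < N \<Longrightarrow> j < N \<Longrightarrow> norm (x i s - x j s) \<le> c"
  shows "diam N x s \<le> c"
  unfolding diam_def using assms by (intro Max.boundedI) (auto intro: finite_image_set2)

lemma diam_nonneg:
  assumes "0 < N"
  shows "0 \<le> diam N x s"
  using norm_le_diam[where i = 0 and j = 0 and x = x and s = s] assms by simp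

lemma is_solution_continuous_inner:
  assumes "is_solution \<psi> t N x" and "i < N"
  shows "continuous_on {0..} (\<lambda>y. x i y \<bullet> w)"
  using assms unfolding is_solution_def by (auto intro!: continuous_intros)

lemma solution_projection_bound:
  fixes \<psi> :: "'a::euclidean_space \<Rightarrow> 'a \<Rightarrow> real"
  assumes sol: "is_solution \<psi> t N x" and N: "2 \<le> N"
    and \<psi>: "\<And>y z. 0 \<le> \<psi> y z" "\<And>y z. \<psi> y z \<le> K"
    and t_mono: "strict_mono t" and t0: "t 0 = 0" and t_inf: "filterlim t at_top sequentially"
    and gaps_sum: "summable (\<lambda>p. t (2*p+2) - t (2*p+1))"
    and init: "\<And>i. i < N \<Longrightarrow> norm (x i 0) \<le> m" and "0 \<le> m"
    and i: "i < N" and "0 \<le> u"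
  shows "x i u \<bullet> w \<le> m * norm w * exp (2 * K * negtime t)"
proof -
  define I where "I = {..<N} \<times> {w, - w}"
  define q where "q p y = x (fst p) y \<bullet> snd p" for p y
  have "q (i, w) u \<le> m * norm w * exp (0 * u + (2 * K - 0) * negtime t)"
  proof (rule max_principle_switching[where I = I and q' = "\<lambda>p s. velocity \<psi> t N x (fst p) s \<bullet> snd p",
                                       OF _ t_mono t0 t_inf gaps_sum])
    fix p n s assume p: "p \<in> I" and s: "s \<in> {t n<..<t (Suc n)}" and "\<forall>p'\<in>I. q p' s \<le> q p s"
    then have "\<bar>x j s \<bullet> snd p\<bar> \<le> x (fst p) s \<bullet> snd p" if "j < N" for j
      using that unfolding I_def q_def by (force simp: abs_le_iff)
    then show "velocity \<psi> t N x (fst p) s \<bullet> snd p \<le> (if even n then 0 else 2 * K) * q p s"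
      using p unfolding q_def I_def by (intro velocity_inner_at_max_abs_le[OF N _ \<psi> t_mono t0 s]) auto
  next
    fix p assume "p \<in> I"
    then have "q p 0 \<le> norm (x (fst p) 0) * norm w" and "fst p < N"
      using norm_cauchy_schwarz[of "x (fst p) 0" "snd p"] unfolding I_def q_def by auto
    then show "q p 0 \<le> m * norm w"
      using mult_right_mono[OF init norm_ge_zero[of w]] by (meson order_trans)
  next
    fix p assume "p \<in> I"
    then show "continuous_on {0..} (q p)"
      unfolding q_def I_def by (auto intro: is_solution_continuous_inner[OF sol])
  next
    fix p n s assume "p \<in> I" "s \<in> {t n<..<t (Suc n)}"
    then show "(q p has_real_derivative velocity \<psi> t N x (fst p) s \<bullet> snd p) (at s)"
      unfolding q_def I_def by (auto intro: is_solution_has_derivative_inner[OF sol])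
  qed (use \<open>0 \<le> m\<close> \<psi>(1)[of 0 0] \<psi>(2)[of 0 0] \<open>0 \<le> u\<close> i in \<open>auto simp: I_def\<close>)
  then show ?thesis unfolding q_def by simp
qed

lemma solution_norm_bound:
  fixes \<psi> :: "'a::euclidean_space \<Rightarrow> 'a \<Rightarrow> real"
  assumes sol: "is_solution \<psi> t N x" and N: "2 \<le> N"
    and \<psi>: "\<And>y z. 0 \<le> \<psi> y z" "\<And>y z. \<psi> y z \<le> K"
    and t_mono: "strict_mono t" and t0: "t 0 = 0" and t_inf: "filterlim t at_top sequentially"
    and gaps_sum: "summable (\<lambda>p. t (2*p+2) - t (2*p+1))"
    and init: "\<And>i. i < N \<Longrightarrow> norm (x i 0) \<le> m"
    and i: "i < N" and "0 \<le> u"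
  shows "norm (x i u) \<le> m * exp (2 * K * negtime t)"
proof (rule norm_le_if_inner_le)
  have "0 \<le> m" using init[of 0] N norm_ge_zero[of "x 0 0"] by linarith
  then show "0 \<le> m * exp (2 * K * negtime t)" by simp
  show "x i u \<bullet> w \<le> m * exp (2 * K * negtime t) * norm w" for w
    using solution_projection_bound[OF sol N \<psi> t_mono t0 t_inf gaps_sum init \<open>0 \<le> m\<close> i \<open>0 \<le> u\<close>]
    by (simp add: mult_ac)
qed

lemma solution_spread_projection_bound:
  fixes \<psi> :: "'a::euclidean_space \<Rightarrow> 'a \<Rightarrow> real"
  assumes sol: "is_solution \<psi> t N x" and N: "2 \<le> N"
    and \<psi>: "\<And>y z. 0 \<le> \<psi> y z" "\<And>y z. \<psi> y z \<le> K"
    and t_mono: "strict_mono t" and t0: "t 0 = 0" and t_inf: "filterlim t at_top sequentially"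
    and gaps_sum: "summable (\<lambda>p. t (2*p+2) - t (2*p+1))"
    and "0 \<le> p" and low: "\<And>i j s. i < N \<Longrightarrow> j < N \<Longrightarrow> 0 \<le> s \<Longrightarrow> p \<le> \<psi> (x i s) (x j s)"
    and "i < N" and "k < N" and "0 \<le> u"
  shows "(x i u - x k u) \<bullet> w \<le> diam N x 0 * norm w * exp (- p * u + (2 * K + p) * negtime t)"
proof -
  have "0 \<le> diam N x 0" using diam_nonneg[of N x 0] N by simp
  define I where "I = {..<N} \<times> {..<N}"
  define q where "q l y = (x (fst l) y - x (snd l) y) \<bullet> w" for l y
  have t_nonneg: "0 \<le> t n" for n
    using t0 strict_mono_less_eq[OF t_mono, of 0 n] by simp
  have "q (i, k) u \<le> diam N x 0 * norm w * exp (- p * u + (2 * K - - p) * negtime t)"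
  proof (rule max_principle_switching[where I = I and
        q' = "\<lambda>l s. (velocity \<psi> t N x (fst l) s - velocity \<psi> t N x (snd l) s) \<bullet> w",
        OF _ t_mono t0 t_inf gaps_sum])
    fix l n s assume l: "l \<in> I" and s: "s \<in> {t n<..<t (Suc n)}" and max: "\<forall>l'\<in>I. q l' s \<le> q l s"
    have "x (snd l) s \<bullet> w \<le> x j s \<bullet> w \<and> x j s \<bullet> w \<le> x (fst l) s \<bullet> w" if "j < N" for j
      using max[rule_format, of "(fst l, j)"] max[rule_format, of "(j, snd l)"] l that
      unfolding I_def q_def by (auto simp: inner_diff_left)
    moreover have "0 \<le> s" using s t_nonneg[of n] by simp
    ultimately show "(velocity \<psi> t N x (fst l) s - velocity \<psi> t N x (snd l) s) \<bullet> w
                     \<le> (if even n then - p else 2 * K) * q l s"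
      using l low unfolding q_def I_def
      by (intro velocity_spread_le[OF N _ _ \<psi> \<open>0 \<le> p\<close> _ t_mono t0 s]) auto
  next
    fix l assume "l \<in> I"
    then have "norm (x (fst l) 0 - x (snd l) 0) \<le> diam N x 0"
      unfolding I_def by (auto intro: norm_le_diam)
    then show "q l 0 \<le> diam N x 0 * norm w"
      using norm_cauchy_schwarz[of "x (fst l) 0 - x (snd l) 0" w]
        mult_right_mono[OF _ norm_ge_zero[of w]]
      unfolding q_def by (meson order_trans)
  next
    fix l assume "l \<in> I"
    then show "continuous_on {0..} (q l)"
      unfolding q_def I_def inner_diff_left
      by (auto intro!: continuous_intros is_solution_continuous_inner[OF sol])
  next
    fix l n s assume "l \<in> I" "s \<in> {t n<..<t (Suc n)}"
    then show "(q l has_real_derivative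
                 (velocity \<psi> t N x (fst l) s - velocity \<psi> t N x (snd l) s) \<bullet> w) (at s)"
      unfolding q_def I_def inner_diff_left
      by (auto intro!: DERIV_diff is_solution_has_derivative_inner[OF sol])
  qed (use \<open>0 \<le> diam N x 0\<close> \<psi>(1)[of 0 0] \<psi>(2)[of 0 0] \<open>0 \<le> p\<close> \<open>0 \<le> u\<close> \<open>i < N\<close> \<open>k < N\<close>
       in \<open>auto simp: I_def\<close>)
  then show ?thesis unfolding q_def by simp
qed

lemma solution_diameter_decay:
  fixes \<psi> :: "'a::euclidean_space \<Rightarrow> 'a \<Rightarrow> real"
  assumes sol: "is_solution \<psi> t N x" and N: "2 \<le> N"
    and \<psi>: "\<And>y z. 0 \<le> \<psi> y z" "\<And>y z. \<psi> y z \<le> K"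
    and t_mono: "strict_mono t" and t0: "t 0 = 0" and t_inf: "filterlim t at_top sequentially"
    and gaps_sum: "summable (\<lambda>p. t (2*p+2) - t (2*p+1))"
    and "0 \<le> p" and low: "\<And>i j s. i < N \<Longrightarrow> j < N \<Longrightarrow> 0 \<le> s \<Longrightarrow> p \<le> \<psi> (x i s) (x j s)"
    and "0 \<le> u"
  shows "diam N x u \<le> diam N x 0 * exp (- p * u + (2 * K + p) * negtime t)"
proof (intro diam_le norm_le_if_inner_le)
  show "0 \<le> diam N x 0 * exp (- p * u + (2 * K + p) * negtime t)"
    using diam_nonneg[of N x 0] N by simp
  show "(x i u - x k u) \<bullet> w \<le> diam N x 0 * exp (- p * u + (2 * K + p) * negtime t) * norm w"
    if "i < N" "k < N" for i k w
    using solution_spread_projection_bound[OF sol N \<psi> t_mono t0 t_inf gaps_sum \<open>0 \<le> p\<close> low that \<open>0 \<le> u\<close>]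
    by (simp add: mult_ac)
qed (use N in simp)

lemma abs_le_supnorm:
  assumes "bounded (range (\<lambda>p. \<psi> (fst p) (snd p)))"
  shows "\<bar>\<psi> y z\<bar> \<le> supnorm \<psi>"
proof -
  have "bdd_above (range (\<lambda>p. \<bar>\<psi> (fst p) (snd p)\<bar>))"
    using assms unfolding bounded_iff bdd_above_def by (auto simp: image_iff)
  from cSUP_upper[OF _ this, of "(y, z)"] show ?thesis unfolding supnorm_def by simp
qed

lemma positive_lower_bound_on_cball:
  fixes f :: "'a::{real_normed_vector,heine_borel} \<Rightarrow> 'a \<Rightarrow> real"
  assumes "continuous_on UNIV (\<lambda>p. f (fst p) (snd p))" and "\<And>y z. 0 < f y z" and "0 \<le> r"
  obtains p where "0 < p" and "\<And>y z. norm y \<le> r \<Longrightarrow> norm z \<le> r \<Longrightarrow> p \<le> f y z"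
proof -
  have "compact (cball (0::'a) r \<times> cball (0::'a) r)" by (intro compact_Times compact_cball)
  moreover have "cball (0::'a) r \<times> cball (0::'a) r \<noteq> {}" using \<open>0 \<le> r\<close> by auto
  moreover have "continuous_on (cball 0 r \<times> cball 0 r) (\<lambda>p. f (fst p) (snd p))"
    using assms(1) by (rule continuous_on_subset) auto
  ultimately obtain p0 where "\<forall>p\<in>cball 0 r \<times> cball 0 r. f (fst p0) (snd p0) \<le> f (fst p) (snd p)"
    using continuous_attains_inf by blast
  then show ?thesis using that[of "f (fst p0) (snd p0)"] assms(2) by auto
qed

lemma solution_diameter_decay_uniform:
  fixes \<psi> :: "'a::euclidean_space \<Rightarrow> 'a \<Rightarrow> real"
  assumes \<psi>_pos: "\<And>y z. 0 < \<psi> y z" and \<psi>_le: "\<And>y z. \<psi> y z \<le> K"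
    and \<psi>_cont: "continuous_on UNIV (\<lambda>p. \<psi> (fst p) (snd p))"
    and t_mono: "strict_mono t" and t0: "t 0 = 0" and t_inf: "filterlim t at_top sequentially"
    and gaps_sum: "summable (\<lambda>p. t (2*p+2) - t (2*p+1))"
  obtains \<gamma> T where "0 < \<gamma>" and "0 < T"
    and "\<And>N x s. 2 \<le> N \<Longrightarrow> is_solution \<psi> t N x \<Longrightarrow> (MAX i\<in>{..<N}. norm (x i 0)) = m \<Longrightarrow> 0 \<le> s \<Longrightarrow>
           diam N x s \<le> exp (- \<gamma> * (s - T)) * diam N x 0"
proof -
  define S where "S = negtime t"
  define R where "R = \<bar>m\<bar> * exp (2 * K * S)"
  have \<psi>_nonneg: "0 \<le> \<psi> y z" for y z using \<psi>_pos by (simp add: less_imp_le)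
  obtain \<gamma> where "0 < \<gamma>" and \<gamma>: "\<And>y z. norm y \<le> R \<Longrightarrow> norm z \<le> R \<Longrightarrow> \<gamma> \<le> \<psi> y z"
    using positive_lower_bound_on_cball[OF \<psi>_cont \<psi>_pos, of R] unfolding R_def by auto
  define T where "T = (2 * K + \<gamma>) * S / \<gamma> + 1"
  have "0 \<le> K" using \<psi>_pos[of 0 0] \<psi>_le[of 0 0] by linarith
  moreover have "0 \<le> S"
    using negtime_upto_le_negtime[OF strict_mono_mono[OF t_mono] gaps_sum, of 0]
    unfolding S_def negtime_upto_def by simp
  ultimately have "0 < T" unfolding T_def using \<open>0 < \<gamma>\<close> by (simp add: add_nonneg_pos)
  have "\<gamma> * T = (2 * K + \<gamma>) * S + \<gamma>" unfolding T_def using \<open>0 < \<gamma>\<close> by (simp add: distrib_left)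
  then have exponent: "- \<gamma> * s + (2 * K + \<gamma>) * S \<le> - \<gamma> * (s - T)" for s
    using \<open>0 < \<gamma>\<close> by (simp add: right_diff_distrib)
  have "diam N x s \<le> exp (- \<gamma> * (s - T)) * diam N x 0"
    if N: "2 \<le> N" and sol: "is_solution \<psi> t N x" and m: "(MAX i\<in>{..<N}. norm (x i 0)) = m"
      and "0 \<le> s" for N x s
  proof -
    have init: "norm (x i 0) \<le> m" if "i < N" for i using m that by (auto intro: Max_ge)
    then have "0 \<le> m" using init[of 0] N norm_ge_zero[of "x 0 0"] by linarith
    have "norm (x i u) \<le> R" if "i < N" "0 \<le> u" for i u
      using solution_norm_bound[OF sol N \<psi>_nonneg \<psi>_le t_mono t0 t_inf gaps_sum init that]
        \<open>0 \<le> m\<close> unfolding R_def S_def by simp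
    then have "diam N x s \<le> diam N x 0 * exp (- \<gamma> * s + (2 * K + \<gamma>) * S)"
      unfolding S_def using \<open>0 < \<gamma>\<close> \<open>0 \<le> s\<close>
      by (intro solution_diameter_decay[OF sol N \<psi>_nonneg \<psi>_le t_mono t0 t_inf gaps_sum]) (auto intro: \<gamma>)
    also have "\<dots> \<le> diam N x 0 * exp (- \<gamma> * (s - T))"
      using exponent[of s] diam_nonneg[of N x 0] N by (intro mult_left_mono) auto
    finally show ?thesis by (simp only: mult.commute)
  qed
  with \<open>0 < \<gamma>\<close> \<open>0 < T\<close> that show ?thesis by blast
qed

theorem theorem4p1:
  fixes \<psi> :: "'a::euclidean_space \<Rightarrow> 'a \<Rightarrow> real"
    and t :: "nat \<Rightarrow> real" and m c :: real
  assumes psi_pos: "\<forall>y z. \<psi> y z > 0"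
    and psi_bdd: "bounded (range (\<lambda>p. \<psi> (fst p) (snd p)))"
    and psi_cont: "continuous_on UNIV (\<lambda>p. \<psi> (fst p) (snd p))"
    and t_mono: "strict_mono t" and t0: "t 0 = 0"
    and t_inf: "filterlim t at_top sequentially"
    and gaps: "\<forall>n. t (2*n+2) - t (2*n+1) < ln 2 / supnorm \<psi>"
    and gaps_sum: "summable (\<lambda>p. t (2*p+2) - t (2*p+1))"
    and c_bdd: "bdd_above (range (cterm \<psi> t m))"
    and c_def: "(SUP n. cterm \<psi> t m n) = c"
    and c_lt: "c < 1"
  shows "\<exists>\<gamma> T. \<gamma> > 0 \<and> T > 0 \<and>
           (\<forall>N x. N \<ge> 2 \<longrightarrow> is_solution \<psi> t N x \<longrightarrow>
              (MAX i\<in>{..<N}. norm (x i 0)) = m \<longrightarrow>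
              (\<forall>s\<ge>0. diam N x s
                  \<le> exp (- \<gamma> * (s - ln 2 / supnorm \<psi> - T)) * diam N x 0))"
proof -
  define K where "K = supnorm \<psi>"
  have \<psi>_le: "\<psi> y z \<le> K" for y z
    using abs_le_supnorm[OF psi_bdd] unfolding K_def by (meson abs_ge_self order_trans)
  obtain \<gamma> T where "0 < \<gamma>" "0 < T" and decay: "\<And>N x s. 2 \<le> N \<Longrightarrow> is_solution \<psi> t N x \<Longrightarrow>
      (MAX i\<in>{..<N}. norm (x i 0)) = m \<Longrightarrow> 0 \<le> s \<Longrightarrow> diam N x s \<le> exp (- \<gamma> * (s - T)) * diam N x 0"
    using solution_diameter_decay_uniform[OF psi_pos[rule_format] \<psi>_le psi_cont t_mono t0 t_inf gaps_sum]
    by blast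
  have "0 \<le> \<gamma> * (ln 2 / K)"
    using \<open>0 < \<gamma>\<close> psi_pos[rule_format, of 0 0] \<psi>_le[of 0 0] by simp
  then have "exp (- \<gamma> * (s - T)) \<le> exp (- \<gamma> * (s - ln 2 / K - T))" for s
    by (simp add: algebra_simps)
  then have "diam N x s \<le> exp (- \<gamma> * (s - ln 2 / K - T)) * diam N x 0"
    if "2 \<le> N" "is_solution \<psi> t N x" "(MAX i\<in>{..<N}. norm (x i 0)) = m" "0 \<le> s" for N x s
    using decay[OF that] diam_nonneg[of N x 0] \<open>2 \<le> N\<close>
    by (meson mult_right_mono order_trans zero_less_numeral less_le_trans)
  then show ?thesis using \<open>0 < \<gamma>\<close> \<open>0 < T\<close> unfolding K_def by blast
qed

end
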